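(* Let $\mathcal{D}$ be a distribution over $\mathcal{X}\times\{0,1\}$, let $\mathcal{H}$ be a finite class of functions $\mathcal{X}\to[0,1]$, and let the loss be $\ell(a,y)=f_1(a)+y f_2(a)$ with $f_1,f_2:[0,1]\to\mathbb{R}$. Assume that, with $\bar\ell(a,b)=f_1(a)+b f_2(a)$ for $a,b\in[0,1]$, there are constants $C_1>c_1>0$ and $C_2>c_2>0$ such that for all $a,b\in[0,1]$ and $i=1,2$, $$\frac{C_i}{2}\big(f_i(a)-f_i(b)\big)^2\ge\bar\ell(a,b)-\bar\ell(b,b)\ge\frac{c_i}{2}\big(f_i(a)-f_i(b)\big)^2.$$ Let $\mathcal{L}(h)=\mathbb{E}_{(x,y)\sim\mathcal{D}}[\ell(h(x),y)]$, let $\widehat h^\star\in\arg\min_{h\in\mathcal{H}}\mathcal{L}(h)$, let $h^\star=\arg\min_{h:\mathcal{X}\to[0,1]}\mathcal{L}(h)$ be the Bayes optimal predictor (minimum over measurable functions), and for $h_1,h_2$ define $\gamma_{f_i}(h_1,h_2)=\mathbb{E}_x[(f_i(h_1(x))-f_i(h_2(x)))^2]$. Then for every $h\in\mathcal{H}$ and $i=1,2$, $$\gamma_{f_i}(h,\widehat h^\star)\le\frac4{c_i}\big(\mathcal{L}(h)-\mathcal{L}(\widehat h^\star)\big)+2\Big(\frac{C_i}{c_i}+1\Big)\gamma_{f_i}(\widehat h^\star,h^\star).$$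
   Context: $x$ denotes a random feature vector distributed as the $\mathcal{X}$-marginal of $\mathcal{D}$. *)

theory Defs
  imports "HOL-Probability.Probability"
begin

definition loss :: "(real \<Rightarrow> real) \<Rightarrow> (real \<Rightarrow> real) \<Rightarrow> real \<Rightarrow> bool \<Rightarrow> real" where
  "loss f1 f2 a y = f1 a + of_bool y * f2 a"

definition lossbar :: "(real \<Rightarrow> real) \<Rightarrow> (real \<Rightarrow> real) \<Rightarrow> real \<Rightarrow> real \<Rightarrow> real" where
  "lossbar f1 f2 a b = f1 a + b * f2 a"

definition risk :: "('a \<times> bool) measure \<Rightarrow> (real \<Rightarrow> real) \<Rightarrow> (real \<Rightarrow> real) \<Rightarrow> ('a \<Rightarrow> real) \<Rightarrow> real" where
  "risk D f1 f2 h = (\<integral>z. loss f1 f2 (h (fst z)) (snd z) \<partial>D)"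

definition xmarginal :: "('a \<times> bool) measure \<Rightarrow> 'a measure \<Rightarrow> 'a measure" where
  "xmarginal D X = distr D X fst"

definition gamma :: "('a \<times> bool) measure \<Rightarrow> 'a measure \<Rightarrow> (real \<Rightarrow> real) \<Rightarrow> ('a \<Rightarrow> real) \<Rightarrow> ('a \<Rightarrow> real) \<Rightarrow> real" where
  "gamma D X f h1 h2 = (\<integral>x. (f (h1 x) - f (h2 x))\<^sup>2 \<partial>(xmarginal D X))"

definition predictor :: "'a measure \<Rightarrow> ('a \<Rightarrow> real) \<Rightarrow> bool" where
  "predictor X h \<longleftrightarrow> h \<in> borel_measurable X \<and> (\<forall>x\<in>space X. h x \<in> {0..1})"

end

theory Submission
  imports Defs
begin

(* Let eta x = P(y = 1 | x) be the regression function. Since the loss is affine in the label,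
   L(g) = E_x[lbar(g x, eta x)], so the sandwich condition integrates to
   (c_i/2) gamma(g, eta) <= L(g) - L(eta) <= (C_i/2) gamma(g, eta) for every predictor g.
   Being a predictor itself, eta is beaten by h*, hence gamma(h*, eta) = 0 and h* may be
   replaced by eta. Now (u - v)^2 <= 2 (u - w)^2 + 2 (v - w)^2 gives
   gamma(h, hhat) <= 2 gamma(h, eta) + 2 gamma(hhat, eta), and the two halves of the integrated
   sandwich, applied to h and to hhat, yield the bound.
   The existence of eta is a Radon-Nikodym argument, and the boundedness of f_1, f_2 needed
   for integrability follows from the lower sandwich bound at b = 0. *)

lemma AE_le_if_set_integral_le:
  fixes g :: "'a \<Rightarrow> real"
  assumes "finite_measure M" "integrable M g"
    and le: "\<And>A. A \<in> sets M \<Longrightarrow> (\<integral>x\<in>A. g x \<partial>M) \<le> c * measure M A"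
  shows "AE x in M. g x \<le> c"
proof -
  interpret finite_measure M by fact
  define A where "A = {x \<in> space M. c < g x}"
  have A: "A \<in> sets M" unfolding A_def using assms(2) by measurable
  have "set_integrable M A g"
    using integrable_mult_indicator[OF A assms(2)] by (simp add: set_integrable_def)
  moreover have "set_integrable M A (\<lambda>_. c)"
    using integrable_mult_indicator[OF A integrable_const[of c]] by (simp add: set_integrable_def)
  ultimately have "(\<integral>x\<in>A. g x - c \<partial>M) = (\<integral>x\<in>A. g x \<partial>M) - c * measure M A"
    using A by (simp add: set_integral_const)
  also have "\<dots> \<le> 0" using le[OF A] by simp
  moreover have "0 \<le> (\<integral>x\<in>A. g x - c \<partial>M)"
    unfolding set_lebesgue_integral_def
    by (intro Bochner_Integration.integral_nonneg) (auto simp: A_def indicator_def)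
  ultimately have "(\<integral>x\<in>A. g x - c \<partial>M) = 0" by linarith
  then have "A \<in> null_sets M"
    using A assms(2) by (intro null_if_pos_func_has_zero_int[of M "\<lambda>x. g x - c"]) (auto simp: A_def)
  from AE_not_in[OF this] AE_space show ?thesis
    by eventually_elim (auto simp: A_def)
qed

lemma distr_weighted_density_exists:
  fixes Y :: "'a \<Rightarrow> real"
  assumes "prob_space M" and T: "T \<in> M \<rightarrow>\<^sub>M N" and Y: "Y \<in> borel_measurable M"
    and Y01: "\<And>z. z \<in> space M \<Longrightarrow> Y z \<in> {0..1}"
  obtains \<eta> where "\<eta> \<in> borel_measurable N" "\<And>x. 0 \<le> \<eta> x" "integrable (distr M N T) \<eta>"
    "\<And>\<phi>. \<phi> \<in> borel_measurable N \<Longrightarrow> (\<integral>z. Y z * \<phi> (T z) \<partial>M) = (\<integral>x. \<eta> x * \<phi> x \<partial>distr M N T)"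
proof -
  interpret M: prob_space M by fact
  define \<mu> where "\<mu> = distr M N T"
  define \<nu> where "\<nu> = distr (density M (\<lambda>z. ennreal (Y z))) N T"
  interpret \<mu>: prob_space \<mu> unfolding \<mu>_def by (rule M.prob_space_distr[OF T])
  have T': "T \<in> density M (\<lambda>z. ennreal (Y z)) \<rightarrow>\<^sub>M N" using T by simp
  have sets_\<nu>: "sets \<nu> = sets \<mu>" unfolding \<nu>_def \<mu>_def by simp
  have "finite_measure \<nu>"
  proof (rule finite_measureI)
    have "emeasure \<nu> (space \<nu>) = (\<integral>\<^sup>+ z. ennreal (Y z) * indicator (space M) z \<partial>M)"
      unfolding \<nu>_def using T' Y measurable_space[OF T]
      by (simp add: emeasure_distr emeasure_density Int_absorb1 subset_eq)
    also have "\<dots> \<le> (\<integral>\<^sup>+ z. 1 \<partial>M)"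
      using Y01 by (intro nn_integral_mono) (auto simp: indicator_def)
    also have "\<dots> < \<infinity>" by (simp add: M.emeasure_space_1)
    finally show "emeasure \<nu> (space \<nu>) \<noteq> \<infinity>" by simp
  qed
  then have \<nu>_sigma_finite: "sigma_finite_measure \<nu>"
    by (rule finite_measure.sigma_finite_measure)
  have ac: "absolutely_continuous \<mu> \<nu>"
    unfolding absolutely_continuous_def
  proof
    fix A assume "A \<in> null_sets \<mu>"
    then have null: "T -` A \<inter> space M \<in> null_sets M" and A: "A \<in> sets N"
      unfolding \<mu>_def using null_sets_distr_iff[OF T] by auto
    have "AE z in M. z \<in> T -` A \<inter> space M \<longrightarrow> ennreal (Y z) = 0"
      using AE_not_in[OF null] by eventually_elim auto
    then have "T -` A \<inter> space M \<in> null_sets (density M (\<lambda>z. ennreal (Y z)))"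
      using null Y by (auto simp: null_sets_density_iff)
    then show "A \<in> null_sets \<nu>"
      unfolding \<nu>_def using null_sets_distr_iff[OF T'] A by simp
  qed
  define \<eta> where "\<eta> = (\<lambda>x. enn2real (RN_deriv \<mu> \<nu> x))"
  show ?thesis
  proof (rule that[of \<eta>])
    show "\<eta> \<in> borel_measurable N"
      unfolding \<eta>_def \<mu>_def by (rule borel_measurable_enn2real) (simp cong: measurable_cong_sets)
    show "0 \<le> \<eta> x" for x unfolding \<eta>_def by simp
    have "integrable \<nu> (\<lambda>_. 1::real)"
      using \<open>finite_measure \<nu>\<close> by (rule finite_measure.integrable_const)
    then show "integrable (distr M N T) \<eta>"
      using \<mu>.RN_deriv_integrable[OF \<nu>_sigma_finite ac sets_\<nu>, of "\<lambda>_. 1"]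
      by (simp add: \<eta>_def \<mu>_def)
    fix \<phi> :: "'b \<Rightarrow> real" assume \<phi>: "\<phi> \<in> borel_measurable N"
    have "(\<integral>z. Y z * \<phi> (T z) \<partial>M) = (\<integral>z. \<phi> (T z) \<partial>density M (\<lambda>z. ennreal (Y z)))"
      using integral_density[of "\<lambda>z. \<phi> (T z)" M Y] \<phi> T Y Y01 by simp
    also have "\<dots> = (\<integral>x. \<phi> x \<partial>\<nu>)"
      unfolding \<nu>_def using integral_distr[OF T' \<phi>] by simp
    also have "\<dots> = (\<integral>x. \<eta> x * \<phi> x \<partial>\<mu>)"
      unfolding \<eta>_def using \<phi> sets_\<nu>
      by (intro \<mu>.RN_deriv_integral[OF \<nu>_sigma_finite ac sets_\<nu>]) (simp add: \<mu>_def)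
    finally show "(\<integral>z. Y z * \<phi> (T z) \<partial>M) = (\<integral>x. \<eta> x * \<phi> x \<partial>distr M N T)"
      unfolding \<mu>_def .
  qed
qed

lemma cond_mean_through_map_exists:
  fixes Y :: "'a \<Rightarrow> real"
  assumes "prob_space M" and T: "T \<in> M \<rightarrow>\<^sub>M N" and Y: "Y \<in> borel_measurable M"
    and Y01: "\<And>z. z \<in> space M \<Longrightarrow> Y z \<in> {0..1}"
  obtains \<eta> where "\<eta> \<in> borel_measurable N" "\<And>x. \<eta> x \<in> {0..1}"
    "\<And>\<phi>. \<phi> \<in> borel_measurable N \<Longrightarrow> (\<integral>z. Y z * \<phi> (T z) \<partial>M) = (\<integral>x. \<eta> x * \<phi> x \<partial>distr M N T)"
proof -
  interpret M: prob_space M by fact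
  let ?\<mu> = "distr M N T"
  interpret \<mu>: prob_space ?\<mu> by (rule M.prob_space_distr[OF T])
  obtain \<eta> where \<eta>: "\<eta> \<in> borel_measurable N" "\<And>x. 0 \<le> \<eta> x" "integrable ?\<mu> \<eta>"
    and weighted: "\<And>\<phi>. \<phi> \<in> borel_measurable N \<Longrightarrow> (\<integral>z. Y z * \<phi> (T z) \<partial>M) = (\<integral>x. \<eta> x * \<phi> x \<partial>?\<mu>)"
    using distr_weighted_density_exists[OF assms] by blast
  have "AE x in ?\<mu>. \<eta> x \<le> 1"
  proof (rule AE_le_if_set_integral_le)
    show "finite_measure ?\<mu>" "integrable ?\<mu> \<eta>" by unfold_locales fact
    fix A assume A: "A \<in> sets ?\<mu>"
    then have A_meas: "(indicator A :: 'b \<Rightarrow> real) \<in> borel_measurable N" by simp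
    have A_T_meas: "(\<lambda>z. indicator A (T z) :: real) \<in> borel_measurable M"
      using measurable_compose[OF T A_meas] .
    have "(\<integral>x\<in>A. \<eta> x \<partial>?\<mu>) = (\<integral>z. Y z * indicator A (T z) \<partial>M)"
      using weighted[OF A_meas] by (simp add: set_lebesgue_integral_def mult.commute)
    also have "\<dots> \<le> (\<integral>z. indicator A (T z) \<partial>M)"
      using Y01 A_T_meas Y
      by (intro integral_mono M.integrable_const_bound[where B=1]) (auto simp: indicator_def)
    also have "\<dots> = 1 * measure ?\<mu> A"
      using integral_distr[OF T A_meas] sets.Int_space_eq2[of A N] A by simp
    finally show "(\<integral>x\<in>A. \<eta> x \<partial>?\<mu>) \<le> 1 * measure ?\<mu> A" .
  qed
  \<comment> \<open>The density is only a.e. at most 1; truncating it makes the bound hold everywhere.\<close>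
  then have trunc: "AE x in ?\<mu>. min 1 (\<eta> x) = \<eta> x"
    by eventually_elim simp
  show ?thesis
  proof (rule that[of "\<lambda>x. min 1 (\<eta> x)"])
    show "(\<lambda>x. min 1 (\<eta> x)) \<in> borel_measurable N" using \<eta>(1) by measurable
    show "min 1 (\<eta> x) \<in> {0..1}" for x using \<eta>(2)[of x] by simp
    fix \<phi> :: "'b \<Rightarrow> real" assume \<phi>: "\<phi> \<in> borel_measurable N"
    have "(\<integral>x. \<eta> x * \<phi> x \<partial>?\<mu>) = (\<integral>x. min 1 (\<eta> x) * \<phi> x \<partial>?\<mu>)"
      using \<phi> \<eta>(1) trunc by (intro integral_cong_AE) (auto elim: eventually_mono)
    with weighted[OF \<phi>] show "(\<integral>z. Y z * \<phi> (T z) \<partial>M) = (\<integral>x. min 1 (\<eta> x) * \<phi> x \<partial>?\<mu>)"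
      by simp
  qed
qed

lemma half_square_le_self_imp_bounds:
  fixes c t :: real
  assumes "c > 0" "c / 2 * t\<^sup>2 \<le> t"
  shows "0 \<le> t" "t \<le> 2 / c"
proof -
  have "0 \<le> c / 2 * t\<^sup>2" using assms(1) by simp
  with assms(2) show "0 \<le> t" by linarith
  show "t \<le> 2 / c"
  proof (cases "t = 0")
    case False
    with \<open>0 \<le> t\<close> have "c / 2 * t \<le> 1"
      using assms(2) by (simp add: power2_eq_square)
    then show ?thesis using assms(1) by (simp add: field_simps)
  qed (use assms in simp)
qed

lemma bounded_if_lossbar_excess_ge_square:
  fixes f1 f2 :: "real \<Rightarrow> real"
  assumes "c1 > 0" "c2 > 0"
    and lower1: "\<And>a. a \<in> {0..1} \<Longrightarrow> c1 / 2 * (f1 a - f1 0)\<^sup>2 \<le> lossbar f1 f2 a 0 - lossbar f1 f2 0 0"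
    and lower2: "\<And>a. a \<in> {0..1} \<Longrightarrow> c2 / 2 * (f2 a - f2 0)\<^sup>2 \<le> lossbar f1 f2 a 0 - lossbar f1 f2 0 0"
  shows "bounded (f1 ` {0..1})" "bounded (f2 ` {0..1})"
proof -
  have excess: "lossbar f1 f2 a 0 - lossbar f1 f2 0 0 = f1 a - f1 0" for a
    by (simp add: lossbar_def)
  have f1_excess: "0 \<le> f1 a - f1 0" "f1 a - f1 0 \<le> 2 / c1" if "a \<in> {0..1}" for a
    using half_square_le_self_imp_bounds[OF \<open>c1 > 0\<close>, of "f1 a - f1 0"] lower1[OF that]
    by (simp_all add: excess)
  show "bounded (f1 ` {0..1})"
    unfolding bounded_real using f1_excess by (intro exI[of _ "\<bar>f1 0\<bar> + 2 / c1"]) force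
  have "\<bar>f2 a - f2 0\<bar> \<le> sqrt (4 / (c1 * c2))" if "a \<in> {0..1}" for a
  proof -
    have "(f2 a - f2 0)\<^sup>2 \<le> 2 / c2 * (f1 a - f1 0)"
      using lower2[OF that] \<open>c2 > 0\<close> by (simp add: excess field_simps)
    also have "\<dots> \<le> 2 / c2 * (2 / c1)"
      using f1_excess(2)[OF that] \<open>c2 > 0\<close> by (intro mult_left_mono) auto
    finally show ?thesis
      using real_sqrt_le_mono by (fastforce simp: mult.commute)
  qed
  then show "bounded (f2 ` {0..1})"
    unfolding bounded_real by (intro exI[of _ "\<bar>f2 0\<bar> + sqrt (4 / (c1 * c2))"]) force
qed

definition bounded_borel_on_unit :: "(real \<Rightarrow> real) \<Rightarrow> bool" where
  "bounded_borel_on_unit F \<longleftrightarrow>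
    F \<in> borel_measurable (restrict_space borel {0..1}) \<and> bounded (F ` {0..1})"

lemma bounded_borel_on_unit_bound:
  assumes "bounded_borel_on_unit F"
  obtains K where "\<And>a. a \<in> {0..1} \<Longrightarrow> \<bar>F a\<bar> \<le> K"
proof -
  from assms obtain K where "\<forall>y \<in> F ` {0..1}. \<bar>y\<bar> \<le> K"
    unfolding bounded_borel_on_unit_def bounded_real by blast
  then show thesis by (intro that[of K]) auto
qed

lemma measurable_comp_predictor:
  assumes "bounded_borel_on_unit F" "predictor X g"
  shows "(\<lambda>x. F (g x)) \<in> borel_measurable X"
proof -
  have "g \<in> X \<rightarrow>\<^sub>M restrict_space borel {0..1}"
    using assms(2) unfolding predictor_def by (intro measurable_restrict_space2) auto
  then show ?thesis
    using measurable_comp assms(1) unfolding bounded_borel_on_unit_def by (fastforce simp: o_def)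
qed

lemma space_xmarginal [simp]: "space (xmarginal D X) = space X"
  and measurable_xmarginal [simp]: "measurable (xmarginal D X) M = measurable X M"
  by (simp_all add: xmarginal_def)

lemma gamma_nonneg: "0 \<le> gamma D X F g h"
  unfolding gamma_def by (simp add: integral_nonneg)

locale labelled_distribution =
  fixes D :: "('a \<times> bool) measure" and X :: "'a measure"
  assumes prob_space_D: "prob_space D"
    and sets_D: "sets D = sets (X \<Otimes>\<^sub>M count_space UNIV)"
begin

sublocale D: prob_space D by (rule prob_space_D)

lemma measurable_fst_D: "fst \<in> D \<rightarrow>\<^sub>M X"
  unfolding measurable_cong_sets[OF sets_D refl] by (rule measurable_fst)

lemma measurable_label_D: "(\<lambda>z. of_bool (snd z) :: real) \<in> borel_measurable D"
proof -
  have "snd \<in> D \<rightarrow>\<^sub>M count_space (UNIV :: bool set)"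
    unfolding measurable_cong_sets[OF sets_D refl] by (rule measurable_snd)
  then show ?thesis by measurable
qed

sublocale marginal: prob_space "xmarginal D X"
  unfolding xmarginal_def by (rule D.prob_space_distr[OF measurable_fst_D])

lemma integral_xmarginal:
  fixes \<phi> :: "'a \<Rightarrow> real"
  shows "\<phi> \<in> borel_measurable X \<Longrightarrow> (\<integral>x. \<phi> x \<partial>xmarginal D X) = (\<integral>z. \<phi> (fst z) \<partial>D)"
  unfolding xmarginal_def by (simp add: integral_distr measurable_fst_D)

lemma integrable_xmarginal_bounded:
  fixes G :: "'a \<Rightarrow> real"
  assumes "G \<in> borel_measurable X" "\<And>x. x \<in> space X \<Longrightarrow> \<bar>G x\<bar> \<le> K"
  shows "integrable (xmarginal D X) G"
  using assms by (intro marginal.integrable_const_bound[where B=K]) auto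

lemma integrable_comp_fst:
  fixes G :: "'a \<Rightarrow> real"
  assumes "G \<in> borel_measurable X" "integrable (xmarginal D X) G"
  shows "integrable D (\<lambda>z. G (fst z))"
  using integrable_distr_eq[OF measurable_fst_D assms(1)] assms(2) unfolding xmarginal_def by simp

lemma integrable_comp_predictor:
  assumes "bounded_borel_on_unit F" "predictor X g"
  shows "integrable (xmarginal D X) (\<lambda>x. F (g x))"
proof -
  obtain K where "\<And>a. a \<in> {0..1} \<Longrightarrow> \<bar>F a\<bar> \<le> K"
    using bounded_borel_on_unit_bound[OF assms(1)] by blast
  with assms(2) show ?thesis
    using measurable_comp_predictor[OF assms]
    unfolding predictor_def by (intro integrable_xmarginal_bounded[where K=K]) auto
qed

lemma integrable_weighted_comp_predictor:
  assumes "bounded_borel_on_unit F" "predictor X g" "predictor X \<eta>"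
  shows "integrable (xmarginal D X) (\<lambda>x. \<eta> x * F (g x))"
proof (rule Bochner_Integration.integrable_bound)
  show "integrable (xmarginal D X) (\<lambda>x. F (g x))" by (rule integrable_comp_predictor[OF assms(1,2)])
  show "(\<lambda>x. \<eta> x * F (g x)) \<in> borel_measurable (xmarginal D X)"
    using measurable_comp_predictor[OF assms(1,2)] assms(3) unfolding predictor_def
    by (auto intro: borel_measurable_times)
  show "AE x in xmarginal D X. norm (\<eta> x * F (g x)) \<le> norm (F (g x))"
    using assms(3) unfolding predictor_def by (auto simp: abs_mult intro!: mult_left_le_one_le)
qed

definition regression_function :: "('a \<Rightarrow> real) \<Rightarrow> bool" where
  "regression_function \<eta> \<longleftrightarrow> predictor X \<eta> \<and>
    (\<forall>\<phi> \<in> borel_measurable X.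
      (\<integral>z. of_bool (snd z) * \<phi> (fst z) \<partial>D) = (\<integral>x. \<eta> x * \<phi> x \<partial>xmarginal D X))"

lemma regression_function_predictor: "regression_function \<eta> \<Longrightarrow> predictor X \<eta>"
  unfolding regression_function_def by simp

lemma regression_function_integral:
  "regression_function \<eta> \<Longrightarrow> \<phi> \<in> borel_measurable X \<Longrightarrow>
    (\<integral>z. of_bool (snd z) * \<phi> (fst z) \<partial>D) = (\<integral>x. \<eta> x * \<phi> x \<partial>xmarginal D X)"
  unfolding regression_function_def by simp

lemma regression_function_exists: "\<exists>\<eta>. regression_function \<eta>"
proof -
  have label_range: "of_bool (snd z) \<in> {0..1::real}" if "z \<in> space D" for z :: "'a \<times> bool"
    by simp
  obtain \<eta> :: "'a \<Rightarrow> real" where "\<eta> \<in> borel_measurable X" "\<And>x. \<eta> x \<in> {0..1}"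
    "\<And>\<phi>. \<phi> \<in> borel_measurable X \<Longrightarrow>
      (\<integral>z. of_bool (snd z) * \<phi> (fst z) \<partial>D) = (\<integral>x. \<eta> x * \<phi> x \<partial>distr D X fst)"
    using cond_mean_through_map_exists[OF prob_space_D measurable_fst_D measurable_label_D label_range]
    by blast
  then have "regression_function \<eta>"
    unfolding regression_function_def predictor_def xmarginal_def by simp
  then show ?thesis by blast
qed

lemma integrable_gamma_integrand:
  assumes "bounded_borel_on_unit F" "predictor X g" "predictor X h"
  shows "integrable (xmarginal D X) (\<lambda>x. (F (g x) - F (h x))\<^sup>2)"
proof -
  obtain K where K: "\<And>a. a \<in> {0..1} \<Longrightarrow> \<bar>F a\<bar> \<le> K"
    using bounded_borel_on_unit_bound[OF assms(1)] by blast
  have "\<bar>(F (g x) - F (h x))\<^sup>2\<bar> \<le> (K + K)\<^sup>2" if "x \<in> space X" for x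
  proof -
    have "\<bar>F (g x) - F (h x)\<bar> \<le> K + K"
      using K[of "g x"] K[of "h x"] assms(2,3) that unfolding predictor_def by force
    then have "\<bar>F (g x) - F (h x)\<bar>\<^sup>2 \<le> (K + K)\<^sup>2" by (intro power_mono) auto
    then show ?thesis by simp
  qed
  then show ?thesis
    using measurable_comp_predictor[OF assms(1,2)] measurable_comp_predictor[OF assms(1,3)]
    by (intro integrable_xmarginal_bounded) auto
qed

lemma gamma_quasi_triangle:
  assumes "bounded_borel_on_unit F" "predictor X g" "predictor X h" "predictor X k"
  shows "gamma D X F g h \<le> 2 * gamma D X F g k + 2 * gamma D X F h k"
proof -
  have "gamma D X F g h
      \<le> (\<integral>x. 2 * (F (g x) - F (k x))\<^sup>2 + 2 * (F (h x) - F (k x))\<^sup>2 \<partial>xmarginal D X)"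
    unfolding gamma_def
  proof (rule integral_mono)
    have sq: "(u - v)\<^sup>2 \<le> 2 * u\<^sup>2 + 2 * v\<^sup>2" for u v :: real
      using zero_le_power2[of "u + v"] by (simp add: power2_eq_square algebra_simps)
    show "(F (g x) - F (h x))\<^sup>2 \<le> 2 * (F (g x) - F (k x))\<^sup>2 + 2 * (F (h x) - F (k x))\<^sup>2" for x
      using sq[of "F (g x) - F (k x)" "F (h x) - F (k x)"] by simp
  qed (use integrable_gamma_integrand[OF assms(1)] assms(2-4) in auto)
  also have "\<dots> = 2 * gamma D X F g k + 2 * gamma D X F h k"
    unfolding gamma_def using integrable_gamma_integrand[OF assms(1)] assms(2-4) by simp
  finally show ?thesis .
qed

lemma gamma_right_eq_if_gamma_zero:
  assumes "bounded_borel_on_unit F" "predictor X g" "predictor X h" "predictor X k"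
    and "gamma D X F h k = 0"
  shows "gamma D X F g k = gamma D X F g h"
proof -
  have "AE x in xmarginal D X. (F (h x) - F (k x))\<^sup>2 = 0"
    using assms(5) integral_nonneg_eq_0_iff_AE[OF integrable_gamma_integrand[OF assms(1,3,4)]]
    unfolding gamma_def by simp
  then have "AE x in xmarginal D X. (F (g x) - F (k x))\<^sup>2 = (F (g x) - F (h x))\<^sup>2"
    by eventually_elim simp
  moreover note [measurable] =
    measurable_comp_predictor[OF assms(1,2)] measurable_comp_predictor[OF assms(1,3)]
    measurable_comp_predictor[OF assms(1,4)]
  ultimately show ?thesis
    unfolding gamma_def by (intro integral_cong_AE) simp_all
qed

end

locale binary_loss = labelled_distribution +
  fixes f1 f2 :: "real \<Rightarrow> real"
  assumes f1: "bounded_borel_on_unit f1" and f2: "bounded_borel_on_unit f2"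
begin

lemma integrable_lossbar:
  assumes "predictor X g" "predictor X \<eta>"
  shows "integrable (xmarginal D X) (\<lambda>x. lossbar f1 f2 (g x) (\<eta> x))"
  unfolding lossbar_def
  using integrable_comp_predictor[OF f1 assms(1)] integrable_weighted_comp_predictor[OF f2 assms]
  by simp

lemma risk_eq_integral_lossbar:
  assumes \<eta>: "regression_function \<eta>" and g: "predictor X g"
  shows "risk D f1 f2 g = (\<integral>x. lossbar f1 f2 (g x) (\<eta> x) \<partial>xmarginal D X)"
proof -
  note [measurable] = measurable_fst_D measurable_label_D
    measurable_comp_predictor[OF f1 g] measurable_comp_predictor[OF f2 g]
  have int_f1: "integrable D (\<lambda>z. f1 (g (fst z)))"
    using integrable_comp_fst[OF _ integrable_comp_predictor[OF f1 g]] by simp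
  have int_f2: "integrable D (\<lambda>z. f2 (g (fst z)))"
    using integrable_comp_fst[OF _ integrable_comp_predictor[OF f2 g]] by simp
  have int_label: "integrable D (\<lambda>z. of_bool (snd z) * f2 (g (fst z)))"
    using int_f2 by (rule Bochner_Integration.integrable_bound) auto
  have "risk D f1 f2 g = (\<integral>z. f1 (g (fst z)) \<partial>D) + (\<integral>z. of_bool (snd z) * f2 (g (fst z)) \<partial>D)"
    unfolding risk_def loss_def using int_f1 int_label by simp
  also have "\<dots> = (\<integral>x. f1 (g x) \<partial>xmarginal D X) + (\<integral>x. \<eta> x * f2 (g x) \<partial>xmarginal D X)"
    using integral_xmarginal[OF measurable_comp_predictor[OF f1 g]]
      regression_function_integral[OF \<eta> measurable_comp_predictor[OF f2 g]]
    by simp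
  also have "\<dots> = (\<integral>x. lossbar f1 f2 (g x) (\<eta> x) \<partial>xmarginal D X)"
    unfolding lossbar_def
    using integrable_comp_predictor[OF f1 g]
      integrable_weighted_comp_predictor[OF f2 g regression_function_predictor[OF \<eta>]]
    by simp
  finally show ?thesis .
qed

lemma excess_risk_eq_integral:
  assumes \<eta>: "regression_function \<eta>" and g: "predictor X g"
  shows "risk D f1 f2 g - risk D f1 f2 \<eta>
    = (\<integral>x. lossbar f1 f2 (g x) (\<eta> x) - lossbar f1 f2 (\<eta> x) (\<eta> x) \<partial>xmarginal D X)"
  using regression_function_predictor[OF \<eta>] g
  by (simp add: risk_eq_integral_lossbar[OF \<eta>] integrable_lossbar)

lemma excess_risk_le_gamma:
  assumes \<eta>: "regression_function \<eta>" and g: "predictor X g" and F: "bounded_borel_on_unit F"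
    and upper: "\<And>a b. a \<in> {0..1} \<Longrightarrow> b \<in> {0..1} \<Longrightarrow>
      lossbar f1 f2 a b - lossbar f1 f2 b b \<le> K / 2 * (F a - F b)\<^sup>2"
  shows "risk D f1 f2 g - risk D f1 f2 \<eta> \<le> K / 2 * gamma D X F g \<eta>"
proof -
  have \<eta>_pred: "predictor X \<eta>" by (rule regression_function_predictor[OF \<eta>])
  have "risk D f1 f2 g - risk D f1 f2 \<eta>
      \<le> (\<integral>x. K / 2 * (F (g x) - F (\<eta> x))\<^sup>2 \<partial>xmarginal D X)"
    unfolding excess_risk_eq_integral[OF \<eta> g]
    using integrable_lossbar[OF g \<eta>_pred] integrable_lossbar[OF \<eta>_pred \<eta>_pred]
      integrable_gamma_integrand[OF F g \<eta>_pred] upper g \<eta>_pred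
    by (intro integral_mono) (auto simp: predictor_def)
  then show ?thesis unfolding gamma_def by simp
qed

lemma gamma_le_excess_risk:
  assumes \<eta>: "regression_function \<eta>" and g: "predictor X g" and F: "bounded_borel_on_unit F"
    and lower: "\<And>a b. a \<in> {0..1} \<Longrightarrow> b \<in> {0..1} \<Longrightarrow>
      k / 2 * (F a - F b)\<^sup>2 \<le> lossbar f1 f2 a b - lossbar f1 f2 b b"
  shows "k / 2 * gamma D X F g \<eta> \<le> risk D f1 f2 g - risk D f1 f2 \<eta>"
proof -
  have \<eta>_pred: "predictor X \<eta>" by (rule regression_function_predictor[OF \<eta>])
  have "(\<integral>x. k / 2 * (F (g x) - F (\<eta> x))\<^sup>2 \<partial>xmarginal D X) \<le> risk D f1 f2 g - risk D f1 f2 \<eta>"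
    unfolding excess_risk_eq_integral[OF \<eta> g]
    using integrable_lossbar[OF g \<eta>_pred] integrable_lossbar[OF \<eta>_pred \<eta>_pred]
      integrable_gamma_integrand[OF F g \<eta>_pred] lower g \<eta>_pred
    by (intro integral_mono) (auto simp: predictor_def)
  then show ?thesis unfolding gamma_def by simp
qed

lemma gamma_regression_eq_0_if_risk_le:
  assumes \<eta>: "regression_function \<eta>" and F: "bounded_borel_on_unit F" and "0 < k"
    and lower: "\<And>a b. a \<in> {0..1} \<Longrightarrow> b \<in> {0..1} \<Longrightarrow>
      k / 2 * (F a - F b)\<^sup>2 \<le> lossbar f1 f2 a b - lossbar f1 f2 b b"
    and Bayes: "predictor X h" "risk D f1 f2 h \<le> risk D f1 f2 \<eta>"
  shows "gamma D X F h \<eta> = 0"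
proof -
  have "k / 2 * gamma D X F h \<eta> \<le> 0"
    using gamma_le_excess_risk[OF \<eta> Bayes(1) F lower] Bayes(2) by linarith
  then show ?thesis
    using \<open>0 < k\<close> gamma_nonneg[of D X F h \<eta>] by (simp add: mult_le_0_iff)
qed

end

lemma combine_excess_risk_bounds:
  fixes k K G G1 G2 R R1 R2 :: real
  assumes "0 < k" and "G \<le> 2 * G1 + 2 * G2" and "k / 2 * G1 \<le> R1 - R" and "R2 - R \<le> K / 2 * G2"
  shows "G \<le> 4 / k * (R1 - R2) + 2 * (K / k + 1) * G2"
proof -
  have "2 * G1 \<le> 4 / k * (R1 - R)"
    using assms(1,3) by (simp add: field_simps)
  have "4 / k * (R2 - R) \<le> 4 / k * (K / 2 * G2)"
    using assms(1,4) by (intro mult_left_mono) auto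
  also have "\<dots> = 2 * (K / k) * G2" by simp
  finally have "4 / k * (R2 - R) \<le> 2 * (K / k) * G2" .
  moreover have "4 / k * (R1 - R2) + 2 * (K / k + 1) * G2
      = 4 / k * (R1 - R) - 4 / k * (R2 - R) + 2 * (K / k) * G2 + 2 * G2"
    by (simp add: algebra_simps diff_divide_distrib)
  ultimately show ?thesis using assms(2) \<open>2 * G1 \<le> 4 / k * (R1 - R)\<close> by linarith
qed

theorem lemma2:
  fixes X :: "'a measure" and D :: "('a \<times> bool) measure"
    and f :: "nat \<Rightarrow> real \<Rightarrow> real" and C c :: "nat \<Rightarrow> real"
    and H :: "('a \<Rightarrow> real) set" and hhat hstar :: "'a \<Rightarrow> real"
  assumes D: "prob_space D" "sets D = sets (X \<Otimes>\<^sub>M count_space UNIV)"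
    and fmeas: "\<And>i. i \<in> {1,2} \<Longrightarrow> f i \<in> borel_measurable (restrict_space borel {0..1})"
    and Cc: "\<And>i. i \<in> {1,2} \<Longrightarrow> C i > c i \<and> c i > 0"
    and sandwich: "\<And>i a b. i \<in> {1,2} \<Longrightarrow> a \<in> {0..1} \<Longrightarrow> b \<in> {0..1} \<Longrightarrow>
        C i / 2 * (f i a - f i b)\<^sup>2 \<ge> lossbar (f 1) (f 2) a b - lossbar (f 1) (f 2) b b
      \<and> lossbar (f 1) (f 2) a b - lossbar (f 1) (f 2) b b \<ge> c i / 2 * (f i a - f i b)\<^sup>2"
    and H: "finite H" "\<And>h. h \<in> H \<Longrightarrow> predictor X h"
    and hhat: "hhat \<in> H" "\<And>h. h \<in> H \<Longrightarrow> risk D (f 1) (f 2) hhat \<le> risk D (f 1) (f 2) h"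
    and hstar: "predictor X hstar"
      "\<And>h. predictor X h \<Longrightarrow> risk D (f 1) (f 2) hstar \<le> risk D (f 1) (f 2) h"
  shows "\<forall>h\<in>H. \<forall>i\<in>{1,2}.
    gamma D X (f i) h hhat \<le> 4 / c i * (risk D (f 1) (f 2) h - risk D (f 1) (f 2) hhat)
      + 2 * (C i / c i + 1) * gamma D X (f i) hhat hstar"
proof (intro ballI)
  fix h and i :: nat assume h: "h \<in> H" and i: "i \<in> {1,2}"
  have c_pos: "0 < c j" if "j \<in> {1,2}" for j using Cc[OF that] by simp
  note lower = sandwich[THEN conjunct2] and upper = sandwich[THEN conjunct1]
  have "bounded (f 1 ` {0..1})" "bounded (f 2 ` {0..1})"
    using bounded_if_lossbar_excess_ge_square[OF c_pos c_pos lower lower] by auto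
  then have f: "bounded_borel_on_unit (f j)" if "j \<in> {1,2}" for j
    using fmeas that unfolding bounded_borel_on_unit_def by auto
  have "binary_loss D X (f 1) (f 2)"
    using D f[of 1] f[of 2]
    by (simp add: binary_loss_def binary_loss_axioms_def labelled_distribution_def)
  then interpret binary_loss D X "f 1" "f 2" .
  obtain \<eta> where \<eta>: "regression_function \<eta>" using regression_function_exists by blast
  have g: "predictor X h" "predictor X hhat" "predictor X \<eta>"
    using H(2) h hhat(1) regression_function_predictor[OF \<eta>] by auto
  have "gamma D X (f i) hstar \<eta> = 0"
    using gamma_regression_eq_0_if_risk_le[OF \<eta> f[OF i] c_pos[OF i] lower[OF i] hstar(1)] hstar(2) g(3)
    by blast
  then have Bayes: "gamma D X (f i) hhat \<eta> = gamma D X (f i) hhat hstar"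
    by (rule gamma_right_eq_if_gamma_zero[OF f[OF i] g(2) hstar(1) g(3)])
  show "gamma D X (f i) h hhat \<le> 4 / c i * (risk D (f 1) (f 2) h - risk D (f 1) (f 2) hhat)
      + 2 * (C i / c i + 1) * gamma D X (f i) hhat hstar"
    using combine_excess_risk_bounds[OF c_pos[OF i] gamma_quasi_triangle[OF f[OF i] g]
        gamma_le_excess_risk[OF \<eta> g(1) f[OF i] lower[OF i]]
        excess_risk_le_gamma[OF \<eta> g(2) f[OF i] upper[OF i]]]
    unfolding Bayes .
qed

end
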